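(* Let $I_n$ denote the number of inversion sequences of length $n$ avoiding all of the patterns $010,101,120,201,210$ (with $I_0=1$). Define the power series $$X_1=\frac{2+z-\sqrt5\,z-\sqrt{4-4(3+\sqrt5)z-2(\sqrt5-3)z^2}}{4z}=1+\tfrac12(1+\sqrt5)z+(2+\sqrt5)z^2+\cdots,$$ $$X_3=\frac{2+z+\sqrt5\,z-\sqrt{4+4(\sqrt5-3)z+2(3+\sqrt5)z^2}}{4z}=1+\tfrac12(1-\sqrt5)z+(2-\sqrt5)z^2+\cdots$$ (square roots being the power series with constant term $2$); these are the two power series roots in $x$ of $z^2x^4-z^2x^3-2zx^3-z^2x^2+3zx^2+x^2-zx-2x+1$. Then $$\sum_{n\ge0}I_nz^n=-\frac{X_1z+X_3z-1}{X_1X_3z^2-X_1z-X_3z-z+1}=1+z+2z^2+5z^3+15z^4+51z^5+188z^6+733z^7+\cdots.$$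
   Context: An inversion sequence of length $n$ is an integer sequence $(a_1,\dots,a_n)$ with $0\le a_i<i$ for all $i$. A pattern is a sequence $\sigma$ of non-negative integers containing every value from $0$ to $\max(\sigma)$; the reduction of a sequence replaces its smallest values by $0$, the next smallest by $1$, etc. A sequence $a$ contains $\sigma$ if some (not necessarily consecutive) subsequence of $a$ has reduction $\sigma$; otherwise $a$ avoids $\sigma$. Equivalently, these are the inversion sequences with no $i<j<k$ such that $a_i\ne a_j$, $a_j\ne a_k$ and $a_i\ge a_k$. *)

theory Defs
  imports Complex_Main "HOL-Library.Sublist" "HOL-Computational_Algebra.Formal_Power_Series"
begin

text \<open>Inversion sequences, stored 0-indexed: position i (0-based) corresponds to a_{i+1},
  so the condition 0 <= a_{i+1} < i+1 becomes a!i <= i.\<close>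
definition inversion_seq :: "nat \<Rightarrow> nat list \<Rightarrow> bool" where
  "inversion_seq n a \<longleftrightarrow> length a = n \<and> (\<forall>i<n. a ! i < Suc i)"

definition reduction :: "nat list \<Rightarrow> nat list" where
  "reduction xs = map (\<lambda>x. card {y \<in> set xs. y < x}) xs"

definition contains_pattern :: "nat list \<Rightarrow> nat list \<Rightarrow> bool" where
  "contains_pattern a \<sigma> \<longleftrightarrow> (\<exists>ys. subseq ys a \<and> reduction ys = \<sigma>)"

definition avoids :: "nat list \<Rightarrow> nat list \<Rightarrow> bool" where
  "avoids a \<sigma> \<longleftrightarrow> \<not> contains_pattern a \<sigma>"

definition I_count :: "nat \<Rightarrow> nat" where
  "I_count n = card {a. inversion_seq n a \<and>
      (\<forall>\<sigma>\<in>{[0,1,0],[1,0,1],[1,2,0],[2,0,1],[2,1,0]}. avoids a \<sigma>)}"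

definition fps_sqrt2 :: "real fps \<Rightarrow> real fps" where
  "fps_sqrt2 A = (THE S. S ^ 2 = A \<and> fps_nth S 0 = 2)"

definition X1 :: "real fps" where
  "X1 = fps_shift 1 (fps_const 2 + fps_const (1 - sqrt 5) * fps_X
        - fps_sqrt2 (fps_const 4 - fps_const (4 * (3 + sqrt 5)) * fps_X
                     - fps_const (2 * (sqrt 5 - 3)) * fps_X ^ 2)) / fps_const 4"

definition X3 :: "real fps" where
  "X3 = fps_shift 1 (fps_const 2 + fps_const (1 + sqrt 5) * fps_X
        - fps_sqrt2 (fps_const 4 + fps_const (4 * (sqrt 5 - 3)) * fps_X
                     + fps_const (2 * (3 + sqrt 5)) * fps_X ^ 2)) / fps_const 4"

end

theory Submission
  imports Defs
begin

text \<open>Appending y to an avoiding inversion sequence w keeps it avoiding iff y \<le> length w and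
  w has no subsequence x1 x2 with x1 \<noteq> x2, x2 \<noteq> y and y \<le> x1. Hence a nonempty avoider
  has the shape u M^t (entries of u below M) or u M^s v^t (entries of u below v < M), and its
  admissible next entries are governed by two statistics, room and gap. Counting avoiders by length,
  room and gap gives two linear functional equations in a catalytic variable x. Substituting for x
  either power series root X1, X3 of the kernel 2 (1 - x) (1 - z x) = c z x, with c = -1 - sqrt 5
  resp. c = -1 + sqrt 5, removes the unknown bivariate series and leaves two linear equations for
  the counting series and the series of total room; solving them gives the formula.\<close>

unbundle fps_syntax

lemma subseq_snoc_iff:
  "subseq ys (w @ [y]) \<longleftrightarrow> subseq ys w \<or> (\<exists>ys'. ys = ys' @ [y] \<and> subseq ys' w)"
proof
  assume "subseq ys (w @ [y])"
  then obtain xs1 xs2 where "ys = xs1 @ xs2" "subseq xs1 w" "subseq xs2 [y]"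
    by (auto simp: subseq_append_iff)
  moreover have "xs2 = [] \<or> xs2 = [y]"
    using \<open>subseq xs2 [y]\<close> by (cases xs2) (auto split: if_splits)
  ultimately show "subseq ys w \<or> (\<exists>ys'. ys = ys' @ [y] \<and> subseq ys' w)"
    by auto
qed (auto simp: subseq_append_iff)

lemma set_mono_subseq: "subseq xs ys \<Longrightarrow> set xs \<subseteq> set ys"
  using list_emb_set[of "(=)" xs ys] by auto

lemma subseq_pair_append_iff:
  "subseq [x1, x2] (u @ v) \<longleftrightarrow>
     subseq [x1, x2] u \<or> (x1 \<in> set u \<and> x2 \<in> set v) \<or> subseq [x1, x2] v"
proof
  assume "subseq [x1, x2] (u @ v)"
  then obtain xs1 xs2 where "[x1, x2] = xs1 @ xs2" "subseq xs1 u" "subseq xs2 v"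
    by (auto simp: subseq_append_iff)
  then show "subseq [x1, x2] u \<or> (x1 \<in> set u \<and> x2 \<in> set v) \<or> subseq [x1, x2] v"
    by (auto simp: Cons_eq_append_conv subseq_singleton_left)
next
  have "subseq [x1, x2] (u @ v)" if "x1 \<in> set u" "x2 \<in> set v"
    using list_emb_append_mono[of "(=)" "[x1]" u "[x2]" v] that
    by (simp add: subseq_singleton_left)
  then show "subseq [x1, x2] u \<or> (x1 \<in> set u \<and> x2 \<in> set v) \<or> subseq [x1, x2] v
      \<Longrightarrow> subseq [x1, x2] (u @ v)"
    by (auto simp: subseq_drop_many subseq_rev_drop_many)
qed

lemma subseq_pair_replicate: "subseq [x1, x2] (replicate t M) \<Longrightarrow> x1 = M \<and> x2 = M"
  using set_mono_subseq[of "[x1, x2]" "replicate t M"] by (auto split: if_splits)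

lemma sum_greaterThanAtMost_reflect:
  assumes "M \<le> n"
  shows "(\<Sum>y\<in>{M<..n}. f (Suc n - y)) = (\<Sum>k=1..n - M. f k)"
proof (rule sum.reindex_bij_witness[of _ "\<lambda>k. Suc n - k" "\<lambda>y. Suc n - y"])
  fix k assume "k \<in> {1..n - M}"
  then show "Suc n - (Suc n - k) = k" "Suc n - k \<in> {M<..n}"
    using assms by auto
qed (auto simp: Suc_diff_le)

lemma sum_gp_from_1_multiplied:
  fixes x :: "'a::comm_ring_1"
  shows "(1 - x) * (\<Sum>k=1..r. x ^ k) = x - x ^ Suc r"
  using sum_gp_multiplied[of 1 r x] by (cases r) simp_all

lemma sum_gp_countdown_multiplied:
  fixes x :: "'a::comm_ring_1"
  shows "(1 - x)^2 * (\<Sum>k=1..r. of_nat (r - k) * x ^ k) = of_nat r * x * (1 - x) - x + x ^ Suc r"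
proof (induction r)
  case (Suc r)
  have "(\<Sum>k=1..Suc r. of_nat (Suc r - k) * x ^ k) = (\<Sum>k=1..r. of_nat (Suc r - k) * x ^ k)"
    by (simp add: sum.cl_ivl_Suc)
  also have "\<dots> = (\<Sum>k=1..r. of_nat (r - k) * x ^ k + x ^ k)"
    by (rule sum.cong) (simp_all add: Suc_diff_le algebra_simps)
  finally have split: "(\<Sum>k=1..Suc r. of_nat (Suc r - k) * x ^ k) =
      (\<Sum>k=1..r. of_nat (r - k) * x ^ k) + (\<Sum>k=1..r. x ^ k)"
    by (simp only: sum.distrib)
  have "(1 - x)^2 * (\<Sum>k=1..Suc r. of_nat (Suc r - k) * x ^ k) =
        (1 - x)^2 * (\<Sum>k=1..r. of_nat (r - k) * x ^ k) + (1 - x) * ((1 - x) * (\<Sum>k=1..r. x ^ k))"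
    by (simp only: split distrib_left power2_eq_square mult.assoc)
  also have "\<dots> = of_nat r * x * (1 - x) - x + x ^ Suc r + (1 - x) * (x - x ^ Suc r)"
    by (simp only: Suc.IH sum_gp_from_1_multiplied)
  also have "\<dots> = of_nat (Suc r) * x * (1 - x) - x + x ^ Suc (Suc r)"
    by (simp add: algebra_simps)
  finally show ?case .
qed (simp add: power2_eq_square)

section \<open>Avoidance and the shape of avoiders\<close>

definition forbidden :: "nat list set" where
  "forbidden = {[0,1,0],[1,0,1],[1,2,0],[2,0,1],[2,1,0]}"

definition avoiding_seq :: "nat list \<Rightarrow> bool" where
  "avoiding_seq a \<longleftrightarrow> (\<forall>i<length a. a!i < Suc i) \<and> (\<forall>\<sigma>\<in>forbidden. avoids a \<sigma>)"

definition blocked :: "nat list \<Rightarrow> nat \<Rightarrow> bool" where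
  "blocked w y \<longleftrightarrow> (\<exists>x1 x2. subseq [x1, x2] w \<and> x1 \<noteq> x2 \<and> x2 \<noteq> y \<and> y \<le> x1)"

lemma length_reduction [simp]: "length (reduction xs) = length xs"
  by (simp add: reduction_def)

lemma reduction_triple_in_forbidden_iff:
  "reduction [x, y, z] \<in> forbidden \<longleftrightarrow> x \<noteq> y \<and> y \<noteq> z \<and> z \<le> x"
proof -
  have card_less: "card {v \<in> set xs. v < t} = length (remdups (filter (\<lambda>v. v < t) xs))"
    for xs :: "nat list" and t
    by (metis length_remdups_card_conv set_filter)
  show ?thesis
    unfolding reduction_def forbidden_def card_less
    by (cases x y rule: linorder_cases; cases y z rule: linorder_cases;
        cases x z rule: linorder_cases) auto
qed

lemma contains_pattern_snoc_iff:
  "contains_pattern (w @ [y]) \<sigma> \<longleftrightarrow>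
     contains_pattern w \<sigma> \<or> (\<exists>ys. subseq ys w \<and> reduction (ys @ [y]) = \<sigma>)"
  unfolding contains_pattern_def subseq_snoc_iff by auto

lemma forbidden_ending_iff_blocked:
  "(\<exists>\<sigma>\<in>forbidden. \<exists>ys. subseq ys w \<and> reduction (ys @ [y]) = \<sigma>) \<longleftrightarrow> blocked w y"
proof
  assume "\<exists>\<sigma>\<in>forbidden. \<exists>ys. subseq ys w \<and> reduction (ys @ [y]) = \<sigma>"
  then obtain ys where ys: "subseq ys w" "reduction (ys @ [y]) \<in> forbidden"
    by blast
  then have "length (reduction (ys @ [y])) = 3"
    by (auto simp: forbidden_def simp del: length_reduction)
  then have "length ys = 2"
    by simp
  then obtain x1 x2 where "ys = [x1, x2]"
    by (metis One_nat_def Suc_1 length_0_conv length_Suc_conv)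
  with ys show "blocked w y"
    by (auto simp: blocked_def reduction_triple_in_forbidden_iff)
next
  assume "blocked w y"
  then obtain x1 x2 where "subseq [x1, x2] w" "x1 \<noteq> x2 \<and> x2 \<noteq> y \<and> y \<le> x1"
    by (auto simp: blocked_def)
  then show "\<exists>\<sigma>\<in>forbidden. \<exists>ys. subseq ys w \<and> reduction (ys @ [y]) = \<sigma>"
    using reduction_triple_in_forbidden_iff[of x1 x2 y] by auto
qed

lemma avoiding_seq_Nil [simp]: "avoiding_seq []"
  by (auto simp: avoiding_seq_def avoids_def contains_pattern_def forbidden_def reduction_def)

lemma avoiding_seq_snoc_iff:
  "avoiding_seq (w @ [y]) \<longleftrightarrow> avoiding_seq w \<and> y \<le> length w \<and> \<not> blocked w y"
proof -
  have "(\<forall>i<length (w @ [y]). (w @ [y]) ! i < Suc i) \<longleftrightarrow>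
        (\<forall>i<length w. w ! i < Suc i) \<and> y \<le> length w"
    by (auto simp: nth_append less_Suc_eq)
  moreover have "(\<forall>\<sigma>\<in>forbidden. avoids (w @ [y]) \<sigma>) \<longleftrightarrow>
        (\<forall>\<sigma>\<in>forbidden. avoids w \<sigma>) \<and> \<not> blocked w y"
    using forbidden_ending_iff_blocked[of w y]
    unfolding avoids_def contains_pattern_snoc_iff by blast
  ultimately show ?thesis
    unfolding avoiding_seq_def by blast
qed

lemma avoiding_seq_entry_less_length:
  "avoiding_seq w \<Longrightarrow> x \<in> set w \<Longrightarrow> x < length w"
  by (auto simp: avoiding_seq_def in_set_conv_nth)

definition top_shape :: "nat list \<Rightarrow> nat list \<Rightarrow> nat \<Rightarrow> nat \<Rightarrow> bool" where
  "top_shape w u t M \<longleftrightarrow> w = u @ replicate t M \<and> 0 < t \<and> (\<forall>x\<in>set u. x < M)"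

definition dip_shape :: "nat list \<Rightarrow> nat list \<Rightarrow> nat \<Rightarrow> nat \<Rightarrow> nat \<Rightarrow> nat \<Rightarrow> bool" where
  "dip_shape w u s M t v \<longleftrightarrow>
     w = u @ replicate s M @ replicate t v \<and> 0 < s \<and> 0 < t \<and> v < M \<and> (\<forall>x\<in>set u. x < v)"

definition least_above :: "nat list \<Rightarrow> nat" where
  "least_above u = (if u = [] then 0 else Suc (Max (set u)))"

lemma all_less_iff_least_above_le: "(\<forall>x\<in>set u. x < y) \<longleftrightarrow> least_above u \<le> y"
  by (auto simp: least_above_def Suc_le_eq)

lemma blocked_imp_le_Max: "blocked w y \<Longrightarrow> y \<le> Max (set w)"
  unfolding blocked_def using set_mono_subseq by (fastforce intro: le_trans Max_ge)

lemma not_blocked_top_shape_iff: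
  assumes "top_shape w u t M"
  shows "\<not> blocked w y \<longleftrightarrow> least_above u \<le> y"
proof
  assume "\<not> blocked w y"
  show "least_above u \<le> y"
  proof (rule ccontr)
    assume "\<not> least_above u \<le> y"
    then obtain x where x: "x \<in> set u" "y \<le> x"
      using all_less_iff_least_above_le[of u y] by (auto simp: not_less)
    then have "x < M" "subseq [x, M] w"
      using assms by (auto simp: top_shape_def subseq_pair_append_iff)
    with x have "blocked w y"
      unfolding blocked_def by force
    with \<open>\<not> blocked w y\<close> show False ..
  qed
next
  assume y: "least_above u \<le> y"
  show "\<not> blocked w y"
  proof
    assume "blocked w y"
    then obtain x1 x2 where b: "subseq [x1, x2] w" "x1 \<noteq> x2" "y \<le> x1"
      by (auto simp: blocked_def)
    then have "x1 \<in> set u"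
      using assms set_mono_subseq
      by (fastforce simp: top_shape_def subseq_pair_append_iff dest: subseq_pair_replicate)
    with y b(3) show False
      using all_less_iff_least_above_le[of u y] by fastforce
  qed
qed

lemma not_blocked_dip_shape_iff:
  assumes "dip_shape w u s M t v"
  shows "\<not> blocked w y \<longleftrightarrow> M < y \<or> y = v"
proof
  assume "\<not> blocked w y"
  moreover have "subseq [M, v] w"
    using assms by (auto simp: dip_shape_def subseq_pair_append_iff)
  ultimately show "M < y \<or> y = v"
    using assms unfolding blocked_def dip_shape_def by force
next
  have w: "w = u @ (replicate s M @ replicate t v)" "\<forall>x\<in>set u. x < v" "v < M"
    using assms by (auto simp: dip_shape_def)
  assume y: "M < y \<or> y = v"
  show "\<not> blocked w y"
  proof
    assume "blocked w y"
    then obtain x1 x2 where b: "subseq [x1, x2] w" "x1 \<noteq> x2" "x2 \<noteq> y" "y \<le> x1"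
      by (auto simp: blocked_def)
    have "x1 \<le> M"
      using set_mono_subseq[OF b(1)] w by (fastforce split: if_splits)
    with y b(4) have "y = v"
      by linarith
    with b w have "x1 \<notin> set u"
      by force
    with b(1) w(1) have "subseq [x1, x2] (replicate s M @ replicate t v)"
      by (auto simp: subseq_pair_append_iff dest: set_mono_subseq)
    with b \<open>y = v\<close> show False
      by (auto simp: subseq_pair_append_iff split: if_splits dest: subseq_pair_replicate)
  qed
qed

lemma top_shape_snoc_greater: "\<forall>x\<in>set w. x < y \<Longrightarrow> top_shape (w @ [y]) w 1 y"
  by (simp add: top_shape_def)

lemma top_shape_snoc_Max: "top_shape w u t M \<Longrightarrow> top_shape (w @ [M]) u (Suc t) M"
  by (simp add: top_shape_def replicate_append_same)

lemma top_shape_snoc_less: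
  "top_shape w u t M \<Longrightarrow> least_above u \<le> y \<Longrightarrow> y < M \<Longrightarrow> dip_shape (w @ [y]) u t M 1 y"
  using all_less_iff_least_above_le[of u y] by (auto simp: top_shape_def dip_shape_def)

lemma dip_shape_snoc: "dip_shape w u s M t v \<Longrightarrow> dip_shape (w @ [v]) u s M (Suc t) v"
  by (simp add: dip_shape_def replicate_append_same)

lemma top_shape_Max: "top_shape w u t M \<Longrightarrow> Max (set w) = M"
  by (rule Max_eqI) (auto simp: top_shape_def)

lemma dip_shape_Max: "dip_shape w u s M t v \<Longrightarrow> Max (set w) = M"
  by (rule Max_eqI) (auto simp: dip_shape_def)

lemma avoiding_seq_shape:
  assumes "avoiding_seq w" "w \<noteq> []"
  shows "(\<exists>u t M. top_shape w u t M) \<or> (\<exists>u s M t v. dip_shape w u s M t v)"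
  using assms
proof (induction w rule: rev_induct)
  case (snoc y w)
  then have "avoiding_seq w" "y \<le> length w" and not_blocked: "\<not> blocked w y"
    by (auto simp: avoiding_seq_snoc_iff)
  have greater: "top_shape (w @ [y]) w 1 y" if "Max (set w) < y"
    using that by (intro top_shape_snoc_greater) (auto dest: Max_ge[rotated])
  show ?case
  proof (cases "w = []")
    case True
    with \<open>y \<le> length w\<close> have "top_shape (w @ [y]) [] 1 0"
      by (simp add: top_shape_def)
    then show ?thesis
      by blast
  next
    case False
    with snoc.IH \<open>avoiding_seq w\<close>
    have "(\<exists>u t M. top_shape w u t M) \<or> (\<exists>u s M t v. dip_shape w u s M t v)"
      by blast
    then show ?thesis
    proof (elim disjE exE)
      fix u t M
      assume top: "top_shape w u t M"
      with not_blocked have "least_above u \<le> y"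
        by (simp add: not_blocked_top_shape_iff)
      then consider "y < M" | "y = M" | "M < y"
        by linarith
      then show ?thesis
        by cases (use top top_shape_snoc_less top_shape_snoc_Max greater
                    top_shape_Max[OF top] \<open>least_above u \<le> y\<close> in blast)+
    next
      fix u s M t v
      assume dip: "dip_shape w u s M t v"
      with not_blocked have "M < y \<or> y = v"
        by (simp add: not_blocked_dip_shape_iff)
      then show ?thesis
        using dip dip_shape_snoc greater dip_shape_Max[OF dip] by blast
    qed
  qed
qed simp

section \<open>Successors, room and gap\<close>

definition successors :: "nat list \<Rightarrow> nat set" where
  "successors w = {y. y \<le> length w \<and> \<not> blocked w y}"

text \<open>The admissible next entries of a nonempty avoider w with maximum M are the room w values in
  (M, length w] and gap w + 1 values \<le> M.\<close>

definition room :: "nat list \<Rightarrow> nat" where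
  "room w = length w - Max (set w)"

definition gap :: "nat list \<Rightarrow> nat" where
  "gap w = (if last w = Max (set w)
            then Max (set w) - least_above (filter (\<lambda>x. x < Max (set w)) w) else 0)"

definition low_successors :: "nat list \<Rightarrow> nat set" where
  "low_successors w = {y \<in> successors w. y \<le> Max (set w)}"

lemma finite_successors [simp]: "finite (successors w)"
  by (rule finite_subset[of _ "{..length w}"]) (auto simp: successors_def)

lemma avoiding_seq_Max_less_length: "avoiding_seq w \<Longrightarrow> w \<noteq> [] \<Longrightarrow> Max (set w) < length w"
  by (simp add: avoiding_seq_entry_less_length)

lemma top_shape_gap: "top_shape w u t M \<Longrightarrow> gap w = M - least_above u"
proof -
  assume top: "top_shape w u t M"
  then have "last w = M" "filter (\<lambda>x. x < M) w = u"
    by (auto simp: top_shape_def filter_id_conv)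
  then show ?thesis
    by (simp add: gap_def top_shape_Max[OF top])
qed

lemma dip_shape_gap: "dip_shape w u s M t v \<Longrightarrow> gap w = 0"
  using dip_shape_Max[of w u s M t v] by (simp add: gap_def dip_shape_def)

lemma room_snoc_le_Max:
  "w \<noteq> [] \<Longrightarrow> y \<le> Max (set w) \<Longrightarrow> Max (set w) \<le> length w \<Longrightarrow> room (w @ [y]) = Suc (room w)"
  using Suc_diff_le[of "Max (set w)" "length w"] by (simp add: room_def max_def)

lemma room_snoc_greater_Max:
  "w \<noteq> [] \<Longrightarrow> Max (set w) < y \<Longrightarrow> room (w @ [y]) = Suc (length w) - y"
  by (simp add: room_def)

lemma gap_snoc_greater_Max:
  assumes "w \<noteq> []" "Max (set w) < y"
  shows "gap (w @ [y]) = y - Suc (Max (set w))"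
proof -
  have "\<forall>x\<in>set w. x < y"
    using assms by (meson List.finite_set Max_ge le_less_trans)
  then show ?thesis
    using top_shape_gap[OF top_shape_snoc_greater] assms by (simp add: least_above_def)
qed

lemma successors_eq_low_Un_greater:
  "successors w = low_successors w \<union> {Max (set w)<..length w}"
  by (auto simp: successors_def low_successors_def dest: blocked_imp_le_Max)

lemma low_successors_top_shape:
  assumes "avoiding_seq w" "top_shape w u t M"
  shows "low_successors w = {least_above u..M}"
proof -
  have "w \<noteq> []"
    using assms(2) by (simp add: top_shape_def)
  then have "M < length w"
    using avoiding_seq_Max_less_length[OF assms(1)] top_shape_Max[OF assms(2)] by simp
  then show ?thesis
    by (auto simp: low_successors_def successors_def top_shape_Max[OF assms(2)]
        not_blocked_top_shape_iff[OF assms(2)])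
qed

lemma low_successors_dip_shape:
  assumes "avoiding_seq w" "dip_shape w u s M t v"
  shows "low_successors w = {v}"
proof -
  have "w \<noteq> []" "v < M"
    using assms(2) by (simp_all add: dip_shape_def)
  then have "M < length w"
    using avoiding_seq_Max_less_length[OF assms(1)] dip_shape_Max[OF assms(2)] by simp
  with \<open>v < M\<close> show ?thesis
    by (auto simp: low_successors_def successors_def dip_shape_Max[OF assms(2)]
        not_blocked_dip_shape_iff[OF assms(2)])
qed

lemma low_successors_card_gap:
  assumes "avoiding_seq w" "w \<noteq> []"
  shows "card (low_successors w) = Suc (gap w)"
    and "(\<Sum>y\<in>low_successors w. gap (w @ [y])) = gap w"
proof -
  from avoiding_seq_shape[OF assms]
  have "card (low_successors w) = Suc (gap w) \<and> (\<Sum>y\<in>low_successors w. gap (w @ [y])) = gap w"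
  proof (elim disjE exE)
    fix u t M
    assume top: "top_shape w u t M"
    define m where "m = least_above u"
    have "m \<le> M"
      using top all_less_iff_least_above_le[of u M] by (simp add: top_shape_def m_def)
    have gap_w: "gap w = M - m" and gap_M: "gap (w @ [M]) = M - m"
      using top_shape_gap[OF top] top_shape_gap[OF top_shape_snoc_Max[OF top]] by (simp_all add: m_def)
    have "gap (w @ [y]) = 0" if "y \<in> {m..<M}" for y
      using that dip_shape_gap[OF top_shape_snoc_less[OF top]] by (simp add: m_def)
    then have "(\<Sum>y\<in>{m..<M}. gap (w @ [y])) = 0"
      by simp
    then show ?thesis
      unfolding low_successors_top_shape[OF assms(1) top] gap_w m_def[symmetric] using \<open>m \<le> M\<close>
      by (simp add: sum.last_plus gap_M)
  next
    fix u s M t v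
    assume dip: "dip_shape w u s M t v"
    then show ?thesis
      using dip_shape_gap[OF dip] dip_shape_gap[OF dip_shape_snoc[OF dip]]
      by (simp add: low_successors_dip_shape[OF assms(1)])
  qed
  then show "card (low_successors w) = Suc (gap w)"
    and "(\<Sum>y\<in>low_successors w. gap (w @ [y])) = gap w"
    by auto
qed

lemma sum_successors_split:
  "(\<Sum>y\<in>successors w. f y) = (\<Sum>y\<in>low_successors w. f y) + (\<Sum>y\<in>{Max (set w)<..length w}. f y)"
  by (subst successors_eq_low_Un_greater, rule sum.union_disjoint) (auto simp: low_successors_def)

lemma sum_low_successors:
  assumes "avoiding_seq w" "w \<noteq> []"
  shows "(\<Sum>y\<in>low_successors w. f (room (w @ [y])) * of_nat (gap (w @ [y]))) =
           f (Suc (room w)) * of_nat (gap w)"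
    and "(\<Sum>y\<in>low_successors w. f (room (w @ [y]))) = of_nat (Suc (gap w)) * f (Suc (room w))"
proof -
  have room: "room (w @ [y]) = Suc (room w)" if "y \<in> low_successors w" for y
    using that room_snoc_le_Max[OF assms(2)] avoiding_seq_Max_less_length[OF assms]
    by (simp add: low_successors_def)
  show "(\<Sum>y\<in>low_successors w. f (room (w @ [y])) * of_nat (gap (w @ [y]))) =
      f (Suc (room w)) * of_nat (gap w)"
    by (simp add: room low_successors_card_gap(2)[OF assms] cong: sum.cong
        flip: sum_distrib_left of_nat_sum)
  show "(\<Sum>y\<in>low_successors w. f (room (w @ [y]))) = of_nat (Suc (gap w)) * f (Suc (room w))"
    by (simp add: room low_successors_card_gap(1)[OF assms] cong: sum.cong)
qed

lemma sum_greater_Max_successors: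
  assumes "avoiding_seq w" "w \<noteq> []"
  shows "(\<Sum>y\<in>{Max (set w)<..length w}. g (room (w @ [y])) (gap (w @ [y]))) =
           (\<Sum>k=1..room w. g k (room w - k))"
proof -
  define M n where "M = Max (set w)" and "n = length w"
  have "M < n" and room_w: "room w = n - M"
    using avoiding_seq_Max_less_length[OF assms] by (simp_all add: M_def n_def room_def)
  have "room (w @ [y]) = Suc n - y" "gap (w @ [y]) = room w - (Suc n - y)" if "y \<in> {M<..n}" for y
    using that room_snoc_greater_Max[OF assms(2)] gap_snoc_greater_Max[OF assms(2)]
    by (simp_all add: M_def n_def room_w)
  then have "(\<Sum>y\<in>{M<..n}. g (room (w @ [y])) (gap (w @ [y]))) =
      (\<Sum>y\<in>{M<..n}. g (Suc n - y) (room w - (Suc n - y)))"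
    by (intro sum.cong) simp_all
  also have "\<dots> = (\<Sum>k=1..room w. g k (room w - k))"
    using sum_greaterThanAtMost_reflect[of M n "\<lambda>k. g k (room w - k)"] \<open>M < n\<close> room_w by simp
  finally show ?thesis
    by (simp add: M_def n_def)
qed

lemma sum_successors:
  fixes x :: "'a::comm_semiring_1"
  assumes "avoiding_seq w" "w \<noteq> []"
  shows "(\<Sum>y\<in>successors w. x ^ room (w @ [y])) =
           of_nat (Suc (gap w)) * x ^ Suc (room w) + (\<Sum>k=1..room w. x ^ k)"
    and "(\<Sum>y\<in>successors w. of_nat (gap (w @ [y])) * x ^ room (w @ [y])) =
           of_nat (gap w) * x ^ Suc (room w) + (\<Sum>k=1..room w. of_nat (room w - k) * x ^ k)"
  using sum_greater_Max_successors[OF assms, of "\<lambda>r q. x ^ r"]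
    sum_greater_Max_successors[OF assms, of "\<lambda>r q. of_nat q * x ^ r"]
    sum_low_successors[OF assms, of "\<lambda>r. x ^ r"]
  by (simp_all add: sum_successors_split mult.commute)

definition avoiders :: "nat \<Rightarrow> nat list set" where
  "avoiders n = {w. length w = n \<and> avoiding_seq w}"

lemma finite_avoiders: "finite (avoiders n)"
proof (rule finite_subset)
  show "avoiders n \<subseteq> {xs. set xs \<subseteq> {..<n} \<and> length xs = n}"
    using avoiding_seq_entry_less_length by (auto simp: avoiders_def)
qed (rule finite_lists_length_eq[OF finite_lessThan])

lemma I_count_eq_card_avoiders: "I_count n = card (avoiders n)"
  unfolding I_count_def avoiders_def avoiding_seq_def inversion_seq_def forbidden_def
  by (rule arg_cong[where f=card]) auto

lemma avoiders_0: "avoiders 0 = {[]}"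
  by (auto simp: avoiders_def)

lemma avoiders_Suc: "avoiders (Suc n) = (\<lambda>(w, y). w @ [y]) ` (SIGMA w:avoiders n. successors w)"
proof (intro equalityI subsetI)
  fix a
  assume a: "a \<in> avoiders (Suc n)"
  define w y where "w = butlast a" and "y = last a"
  have "a \<noteq> []"
    using a by (auto simp: avoiders_def)
  then have "a = w @ [y]"
    by (simp add: w_def y_def)
  with a have "w \<in> avoiders n" "y \<in> successors w"
    by (auto simp: avoiders_def successors_def avoiding_seq_snoc_iff)
  with \<open>a = w @ [y]\<close> show "a \<in> (\<lambda>(w, y). w @ [y]) ` (SIGMA w:avoiders n. successors w)"
    by (auto intro: image_eqI[of _ _ "(w, y)"])
qed (auto simp: avoiders_def successors_def avoiding_seq_snoc_iff)

lemma sum_avoiders_Suc: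
  "(\<Sum>a\<in>avoiders (Suc n). f a) = (\<Sum>w\<in>avoiders n. \<Sum>y\<in>successors w. f (w @ [y]))"
proof -
  have "inj_on (\<lambda>(w, y). w @ [y]) (SIGMA w:avoiders n. successors w)"
    by (auto simp: inj_on_def)
  then have "(\<Sum>a\<in>avoiders (Suc n). f a) = (\<Sum>(w, y)\<in>(SIGMA w:avoiders n. successors w). f (w @ [y]))"
    unfolding avoiders_Suc by (subst sum.reindex) (auto simp: case_prod_beta)
  also have "\<dots> = (\<Sum>w\<in>avoiders n. \<Sum>y\<in>successors w. f (w @ [y]))"
    by (rule sum.Sigma[symmetric]) (auto simp: finite_avoiders)
  finally show ?thesis .
qed

lemma avoiders_1: "avoiders (Suc 0) = {[0]}"
proof -
  have "successors [] = {0}"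
    by (auto simp: successors_def blocked_def)
  then have "(SIGMA w:avoiders 0. successors w) = {([], 0)}"
    by (simp add: avoiders_0 Sigma_def)
  then show ?thesis
    by (simp add: avoiders_Suc)
qed

definition room_poly :: "nat \<Rightarrow> 'a::comm_ring_1 \<Rightarrow> 'a" where
  "room_poly n x = (\<Sum>w\<in>avoiders n. x ^ room w)"

definition gap_room_poly :: "nat \<Rightarrow> 'a::comm_ring_1 \<Rightarrow> 'a" where
  "gap_room_poly n x = (\<Sum>w\<in>avoiders n. of_nat (gap w) * x ^ room w)"

lemma room_poly_1: "room_poly (Suc 0) x = x"
  by (simp add: room_poly_def avoiders_1 room_def)

lemma gap_room_poly_1: "gap_room_poly (Suc 0) x = 0"
  by (simp add: gap_room_poly_def avoiders_1 gap_def least_above_def)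

lemma avoiders_pos_memD: "w \<in> avoiders n \<Longrightarrow> 0 < n \<Longrightarrow> avoiding_seq w \<and> w \<noteq> []"
  by (auto simp: avoiders_def)

lemma sum_successors_room_multiplied:
  fixes x :: "'a::comm_ring_1"
  assumes "avoiding_seq w" "w \<noteq> []"
  shows "(1 - x) * (\<Sum>y\<in>successors w. x ^ room (w @ [y])) =
           x - x * x ^ room w + (1 - x) * x * (x ^ room w + of_nat (gap w) * x ^ room w)"
  unfolding sum_successors(1)[OF assms] distrib_left sum_gp_from_1_multiplied
  by (simp add: algebra_simps)

lemma sum_successors_gap_multiplied:
  fixes x :: "'a::comm_ring_1"
  assumes "avoiding_seq w" "w \<noteq> []"
  shows "(1 - x)^2 * (\<Sum>y\<in>successors w. of_nat (gap (w @ [y])) * x ^ room (w @ [y])) =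
           x * (1 - x) * of_nat (room w) - x + x * x ^ room w
           + (1 - x)^2 * x * (of_nat (gap w) * x ^ room w)"
  unfolding sum_successors(2)[OF assms] distrib_left sum_gp_countdown_multiplied
  by (simp add: algebra_simps power2_eq_square)

lemma room_poly_Suc:
  fixes x :: "'a::comm_ring_1"
  assumes "0 < n"
  shows "(1 - x) * room_poly (Suc n) x =
           x * of_nat (card (avoiders n)) - x * room_poly n x
           + (1 - x) * x * (room_poly n x + gap_room_poly n x)"
proof -
  have "(1 - x) * room_poly (Suc n) x =
        (\<Sum>w\<in>avoiders n. (1 - x) * (\<Sum>y\<in>successors w. x ^ room (w @ [y])))"
    by (simp only: room_poly_def sum_avoiders_Suc sum_distrib_left)
  also have "\<dots> = (\<Sum>w\<in>avoiders n.
      x - x * x ^ room w + (1 - x) * x * (x ^ room w + of_nat (gap w) * x ^ room w))"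
    using avoiders_pos_memD[OF _ assms] by (auto intro: sum.cong sum_successors_room_multiplied)
  finally show ?thesis
    by (simp add: room_poly_def gap_room_poly_def sum.distrib sum_subtractf flip: sum_distrib_left)
qed

lemma gap_room_poly_Suc:
  fixes x :: "'a::comm_ring_1"
  assumes "0 < n"
  shows "(1 - x)^2 * gap_room_poly (Suc n) x =
           x * (1 - x) * of_nat (\<Sum>w\<in>avoiders n. room w) - x * of_nat (card (avoiders n))
           + x * room_poly n x + (1 - x)^2 * x * gap_room_poly n x"
proof -
  have "(1 - x)^2 * gap_room_poly (Suc n) x =
      (\<Sum>w\<in>avoiders n. (1 - x)^2 * (\<Sum>y\<in>successors w. of_nat (gap (w @ [y])) * x ^ room (w @ [y])))"
    by (simp only: gap_room_poly_def sum_avoiders_Suc sum_distrib_left)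
  also have "\<dots> = (\<Sum>w\<in>avoiders n. x * (1 - x) * of_nat (room w) - x + x * x ^ room w
          + (1 - x)^2 * x * (of_nat (gap w) * x ^ room w))"
    using avoiders_pos_memD[OF _ assms] by (auto intro: sum.cong sum_successors_gap_multiplied)
  finally show ?thesis
    by (simp add: room_poly_def gap_room_poly_def sum.distrib sum_subtractf
        flip: sum_distrib_left of_nat_sum)
qed

section \<open>Functional equations\<close>

definition X_series :: "(nat \<Rightarrow> 'a::comm_ring_1 fps) \<Rightarrow> 'a fps" where
  "X_series c = Abs_fps (\<lambda>m. \<Sum>i\<le>m. c i $ (m - i))"

lemma X_series_nth: "X_series c $ m = (\<Sum>i\<le>m. c i $ (m - i))"
  by (simp add: X_series_def)

lemma X_series_nth_eq_partial_sum:
  "k \<le> m \<Longrightarrow> X_series c $ k = (\<Sum>i\<le>m. fps_X ^ i * c i) $ k"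
proof -
  assume "k \<le> m"
  have "(\<Sum>i\<le>m. fps_X ^ i * c i) $ k = (\<Sum>i\<le>m. if k < i then 0 else c i $ (k - i))"
    by (simp add: fps_sum_nth fps_X_power_mult_nth)
  also have "\<dots> = (\<Sum>i\<le>k. c i $ (k - i))"
    by (rule sum.mono_neutral_cong_right) (use \<open>k \<le> m\<close> in auto)
  finally show ?thesis
    by (simp add: X_series_def)
qed

lemma X_series_mult_left: "X_series (\<lambda>n. A * c n) = A * X_series c"
proof (rule fps_ext)
  fix m
  have "(A * X_series c) $ m = (A * (\<Sum>i\<le>m. fps_X ^ i * c i)) $ m"
    unfolding fps_mult_nth by (rule sum.cong) (simp_all add: X_series_nth_eq_partial_sum[of _ m c])
  also have "\<dots> = (\<Sum>i\<le>m. fps_X ^ i * (A * c i)) $ m"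
    by (simp add: sum_distrib_left algebra_simps)
  finally show "X_series (\<lambda>n. A * c n) $ m = (A * X_series c) $ m"
    by (simp add: X_series_nth_eq_partial_sum[of m m])
qed

lemma X_series_add: "X_series (\<lambda>n. c n + d n) = X_series c + X_series d"
  by (rule fps_ext) (simp add: X_series_def sum.distrib)

lemma X_series_diff: "X_series (\<lambda>n. c n - d n) = X_series c - X_series d"
  by (rule fps_ext) (simp add: X_series_def sum_subtractf)

lemma X_series_unfold: "X_series c = c 0 + fps_X * X_series (\<lambda>n. c (Suc n))"
proof (rule fps_ext)
  fix m
  show "X_series c $ m = (c 0 + fps_X * X_series (\<lambda>n. c (Suc n))) $ m"
  proof (cases m)
    case (Suc k)
    have "X_series c $ Suc k = c 0 $ Suc k + (\<Sum>i\<le>k. c (Suc i) $ (k - i))"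
      unfolding X_series_nth by (subst sum.atMost_Suc_shift) simp
    then show ?thesis
      using Suc by (simp add: X_series_nth)
  qed (simp add: X_series_nth)
qed

lemma X_series_of_nat: "X_series (\<lambda>n. of_nat (a n)) = Abs_fps (\<lambda>n. of_nat (a n))"
proof (rule fps_ext)
  fix m
  have "(\<Sum>i\<le>m. (of_nat (a i) :: 'a fps) $ (m - i)) = (\<Sum>i\<in>{m}. of_nat (a i))"
    by (rule sum.mono_neutral_cong_right) (auto simp: fps_of_nat[symmetric])
  then show "X_series (\<lambda>n. of_nat (a n)) $ m = Abs_fps (\<lambda>n. of_nat (a n)) $ m"
    by (simp add: X_series_def)
qed

text \<open>The series in z = fps_X of the room and gap polynomials of avoiders of length n + 1,
  with the catalytic variable specialised to a power series U.\<close>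

definition room_series :: "'a::comm_ring_1 fps \<Rightarrow> 'a fps" where
  "room_series U = X_series (\<lambda>n. room_poly (Suc n) U)"

definition gap_room_series :: "'a::comm_ring_1 fps \<Rightarrow> 'a fps" where
  "gap_room_series U = X_series (\<lambda>n. gap_room_poly (Suc n) U)"

definition count_series :: "'a::comm_ring_1 fps" where
  "count_series = X_series (\<lambda>n. of_nat (card (avoiders (Suc n))))"

definition total_room_series :: "'a::comm_ring_1 fps" where
  "total_room_series = X_series (\<lambda>n. of_nat (\<Sum>w\<in>avoiders (Suc n). room w))"

lemma room_series_equation:
  "(1 - U) * (room_series U - U) =
     fps_X * (U * count_series - U * room_series U + (1 - U) * U * (room_series U + gap_room_series U))"
proof -
  have "(1 - U) * (room_series U - U) = fps_X * ((1 - U) * X_series (\<lambda>n. room_poly (Suc (Suc n)) U))"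
    by (subst room_series_def, subst X_series_unfold) (simp add: room_poly_1 algebra_simps)
  also have "(1 - U) * X_series (\<lambda>n. room_poly (Suc (Suc n)) U) =
      X_series (\<lambda>n. U * of_nat (card (avoiders (Suc n))) - U * room_poly (Suc n) U
                     + (1 - U) * U * (room_poly (Suc n) U + gap_room_poly (Suc n) U))"
    by (simp only: room_poly_Suc zero_less_Suc flip: X_series_mult_left)
  also have "\<dots> = U * count_series - U * room_series U + (1 - U) * U * (room_series U + gap_room_series U)"
    by (simp only: X_series_add X_series_diff X_series_mult_left count_series_def room_series_def
        gap_room_series_def)
  finally show ?thesis .
qed

lemma gap_room_series_equation:
  "(1 - U)^2 * gap_room_series U =
     fps_X * (U * (1 - U) * total_room_series - U * count_series + U * room_series U
              + (1 - U)^2 * U * gap_room_series U)"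
proof -
  have "(1 - U)^2 * gap_room_series U = fps_X * ((1 - U)^2 * X_series (\<lambda>n. gap_room_poly (Suc (Suc n)) U))"
    by (subst gap_room_series_def, subst X_series_unfold) (simp add: gap_room_poly_1 algebra_simps)
  also have "(1 - U)^2 * X_series (\<lambda>n. gap_room_poly (Suc (Suc n)) U) =
      X_series (\<lambda>n. U * (1 - U) * of_nat (\<Sum>w\<in>avoiders (Suc n). room w)
                     - U * of_nat (card (avoiders (Suc n))) + U * room_poly (Suc n) U
                     + (1 - U)^2 * U * gap_room_poly (Suc n) U)"
    by (simp only: gap_room_poly_Suc zero_less_Suc flip: X_series_mult_left)
  also have "\<dots> = U * (1 - U) * total_room_series - U * count_series + U * room_series U
                   + (1 - U)^2 * U * gap_room_series U"
    by (simp only: X_series_add X_series_diff X_series_mult_left count_series_def room_series_def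
        gap_room_series_def total_room_series_def)
  finally show ?thesis .
qed

lemma count_series_I_count:
  "1 + fps_X * count_series = Abs_fps (\<lambda>n. real (I_count n))"
proof (rule fps_ext)
  fix n
  show "(1 + fps_X * count_series) $ n = Abs_fps (\<lambda>n. real (I_count n)) $ n"
    by (cases n) (simp_all add: count_series_def X_series_of_nat I_count_eq_card_avoiders avoiders_0)
qed

section \<open>The kernel method\<close>

text \<open>For a root U of the kernel both equations are linear in \<Phi> and \<Psi>, and these can be
  eliminated because c * c + 2 * c = 4.\<close>

lemma kernel_elimination:
  fixes X U \<Phi> \<Psi> F D c :: "'a::idom"
  assumes two: "(2::'a) \<noteq> 0" and "X \<noteq> 0" "U \<noteq> 0"
    and eq1: "(1 - U) * (\<Phi> - U) = X * (U * F - U * \<Phi> + (1 - U) * U * (\<Phi> + \<Psi>))"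
    and eq2: "(1 - U)^2 * \<Psi> = X * (U * (1 - U) * D - U * F + U * \<Phi> + (1 - U)^2 * U * \<Psi>)"
    and kernel: "2 * (1 - U) * (1 - X * U) = c * X * U"
    and c: "c * c + 2 * c = 4"
  shows "(1 - U) * (c + 2 * X * D) = (2 - c) * X * F"
proof -
  have "U * (c * X * \<Phi> + 2 * X * \<Phi> - 2 * X * (1 - U) * \<Psi> - 2 * (1 - U) - 2 * X * F)
      = 2 * ((1 - U) * (\<Phi> - U) - X * (U * F - U * \<Phi> + (1 - U) * U * (\<Phi> + \<Psi>)))
        + \<Phi> * (c * X * U - 2 * (1 - U) * (1 - X * U))"
    by (simp add: algebra_simps)
  also have "\<dots> = 0"
    using eq1 kernel by simp
  finally have A1: "c * X * \<Phi> + 2 * X * \<Phi> - 2 * X * (1 - U) * \<Psi> - 2 * (1 - U) - 2 * X * F = 0"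
    using \<open>U \<noteq> 0\<close> by simp
  have "(X * U) * (c * (1 - U) * \<Psi> - 2 * \<Phi> - 2 * (1 - U) * D + 2 * F)
      = 2 * ((1 - U)^2 * \<Psi> - X * (U * (1 - U) * D - U * F + U * \<Phi> + (1 - U)^2 * U * \<Psi>))
        + (1 - U) * \<Psi> * (c * X * U - 2 * (1 - U) * (1 - X * U))"
    by (simp add: algebra_simps power2_eq_square)
  also have "\<dots> = 0"
    using eq2 kernel by simp
  finally have A2: "c * (1 - U) * \<Psi> - 2 * \<Phi> - 2 * (1 - U) * D + 2 * F = 0"
    using \<open>U \<noteq> 0\<close> \<open>X \<noteq> 0\<close> by simp
  have "2 * ((1 - U) * (c + 2 * X * D) - (2 - c) * X * F)
      = - (c * (c * X * \<Phi> + 2 * X * \<Phi> - 2 * X * (1 - U) * \<Psi> - 2 * (1 - U) - 2 * X * F))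
        - 2 * X * (c * (1 - U) * \<Psi> - 2 * \<Phi> - 2 * (1 - U) * D + 2 * F) + X * \<Phi> * (c * c + 2 * c - 4)"
    by (simp add: algebra_simps)
  also have "\<dots> = 0"
    using A1 A2 c by simp
  finally show ?thesis
    using two by simp
qed

lemma kernel_root_relation:
  fixes U c :: "'a::{idom,ring_char_0} fps"
  assumes "U \<noteq> 0"
    and "2 * (1 - U) * (1 - fps_X * U) = c * fps_X * U"
    and "c * c + 2 * c = 4"
  shows "(1 - U) * (c + 2 * fps_X * total_room_series) = (2 - c) * (fps_X * count_series)"
proof -
  have "(2 :: 'a fps) $ 0 \<noteq> 0"
    by simp
  then have "(2 :: 'a fps) \<noteq> 0"
    by (metis fps_zero_nth)
  from kernel_elimination[OF this fps_X_neq_zero assms(1) room_series_equation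
      gap_room_series_equation assms(2,3)]
  show ?thesis
    by (simp add: mult.assoc)
qed

lemma kernel_root_coeffs:
  fixes Y c :: "'a::field_char_0 fps"
  assumes "2 * (1 - Y) * (1 - fps_X * Y) = c * fps_X * Y"
  shows "Y $ 0 = 1" and "Y $ 1 = - (c $ 0) / 2"
proof -
  have "2 * (1 - Y) * (1 - fps_X * Y) = 2 - 2 * Y - fps_X * (2 * Y - 2 * Y^2)"
    by (simp add: algebra_simps power2_eq_square)
  with assms have eq: "2 - 2 * Y - fps_X * (2 * Y - 2 * Y^2) = fps_X * (c * Y)"
    by (simp add: mult.commute mult.left_commute)
  from arg_cong[OF eq, of "\<lambda>f. f $ 0"] show "Y $ 0 = 1"
    by simp
  with arg_cong[OF eq, of "\<lambda>f. f $ 1"] have "- (2 * Y $ 1) = c $ 0"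
    by (simp add: power2_eq_square)
  then have "2 * Y $ 1 = - (c $ 0)"
    by (metis minus_minus)
  then show "Y $ 1 = - (c $ 0) / 2"
    by (simp add: field_simps)
qed

lemma fps_sqrt2_eq:
  assumes "A $ 0 = 4"
  shows "fps_sqrt2 A ^ 2 = A" and "fps_sqrt2 A $ 0 = 2"
proof -
  define R where "R = fps_radical (\<lambda>k x. sqrt x) 2 A"
  have "sqrt (A $ 0) = 2"
    using assms by simp
  then have R0: "R $ 0 = 2" and R2: "R ^ 2 = A"
    using power_radical[of A "\<lambda>k x. sqrt x" 1] assms by (simp_all add: R_def numeral_2_eq_2)
  have "S = R" if "S ^ 2 = A \<and> S $ 0 = 2" for S
  proof -
    have "(S - R) * (S + R) = 0"
      using that R2 by (simp add: algebra_simps power2_eq_square)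
    moreover have "(S + R) $ 0 \<noteq> 0"
      using that R0 by simp
    then have "S + R \<noteq> 0"
      by (metis fps_zero_nth)
    ultimately show "S = R"
      by simp
  qed
  then have "fps_sqrt2 A = R"
    unfolding fps_sqrt2_def using R0 R2 by blast
  with R0 R2 show "fps_sqrt2 A ^ 2 = A" "fps_sqrt2 A $ 0 = 2"
    by simp_all
qed

lemma radical_formula_kernel_root:
  fixes t :: real and Y :: "real fps"
  assumes t: "t * t = 5"
    and Y: "Y = fps_shift 1 (fps_const 2 + fps_const (1 - t) * fps_X
        - fps_sqrt2 (fps_const 4 - fps_const (4 * (3 + t)) * fps_X
                     - fps_const (2 * (t - 3)) * fps_X ^ 2)) / fps_const 4"
  shows "2 * (1 - Y) * (1 - fps_X * Y) = fps_const (- 1 - t) * fps_X * Y"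
proof -
  define T where "T = fps_const t"
  define A where "A = fps_const 4 - fps_const (4 * (3 + t)) * fps_X - fps_const (2 * (t - 3)) * fps_X ^ 2"
  define S where "S = fps_sqrt2 A"
  define N where "N = fps_const 2 + fps_const (1 - t) * fps_X - S"
  have const_eqs: "fps_const (4 * (3 + t)) = 4 * (3 + T)" "fps_const (2 * (t - 3)) = 2 * (T - 3)"
    "fps_const 2 = 2" "fps_const 4 = 4"
    "fps_const (1 - t) = 1 - T" "fps_const (- 1 - t) = - 1 - T"
    by (simp_all add: T_def fps_numeral_fps_const) (simp_all add: fps_eq_iff)
  have "A $ 0 = 4"
    by (simp add: A_def)
  then have S2: "S ^ 2 = A" and "S $ 0 = 2"
    by (simp_all add: S_def fps_sqrt2_eq)
  then have "N $ 0 = 0"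
    by (simp add: N_def)
  then have N_shift: "N = fps_X * fps_shift 1 N"
    by (intro fps_ext) (simp add: fps_X_mult_nth)
  have "fps_shift 1 N = 4 * Y"
    by (simp add: Y N_def S_def A_def fps_divide_unit fps_const_inverse fps_numeral_fps_const
        mult.commute)
  then have "N = fps_X * (4 * Y)"
    using N_shift by simp
  then have "S = 2 + (1 - T) * fps_X - 4 * fps_X * Y"
    by (simp add: N_def const_eqs algebra_simps)
  moreover have "A = 4 - 4 * (3 + T) * fps_X - 2 * (T - 3) * fps_X ^ 2"
    by (simp only: A_def const_eqs)
  ultimately have "(2 + (1 - T) * fps_X - 4 * fps_X * Y) ^ 2
      - (4 - 4 * (3 + T) * fps_X - 2 * (T - 3) * fps_X ^ 2) = 0"
    using S2 by simp
  moreover have "(2 + (1 - T) * fps_X - 4 * fps_X * Y) ^ 2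
      - (4 - 4 * (3 + T) * fps_X - 2 * (T - 3) * fps_X ^ 2)
      = 8 * fps_X * (2 * (1 - Y) * (1 - fps_X * Y) - (- 1 - T) * fps_X * Y) + fps_X ^ 2 * (T * T - 5)"
    by (simp add: algebra_simps power2_eq_square)
  moreover have "T * T = 5"
    using t by (simp add: T_def fps_numeral_fps_const)
  ultimately have "2 * (1 - Y) * (1 - fps_X * Y) = (- 1 - T) * fps_X * Y"
    by simp
  then show ?thesis
    by (simp add: const_eqs)
qed

lemma X1_kernel_root: "2 * (1 - X1) * (1 - fps_X * X1) = (- 1 - fps_const (sqrt 5)) * fps_X * X1"
proof -
  have "2 * (1 - X1) * (1 - fps_X * X1) = fps_const (- 1 - sqrt 5) * fps_X * X1"
    by (rule radical_formula_kernel_root) (simp_all add: X1_def)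
  then show ?thesis
    by (simp only: fps_const_sub[symmetric] fps_const_neg[symmetric] fps_const_1_eq_1)
qed

lemma X3_kernel_root: "2 * (1 - X3) * (1 - fps_X * X3) = (- 1 + fps_const (sqrt 5)) * fps_X * X3"
proof -
  have "fps_const 4 - fps_const (4 * (3 + - sqrt 5)) * fps_X - fps_const (2 * (- sqrt 5 - 3)) * fps_X ^ 2
      = fps_const 4 + fps_const (4 * (sqrt 5 - 3)) * fps_X + fps_const (2 * (3 + sqrt 5)) * (fps_X ^ 2 :: real fps)"
    by (simp add: fps_eq_iff fps_X_power_nth algebra_simps)
  moreover have "fps_const (1 - - sqrt 5) = fps_const (1 + sqrt 5)"
    by simp
  ultimately have "X3 = fps_shift 1 (fps_const 2 + fps_const (1 - - sqrt 5) * fps_X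
        - fps_sqrt2 (fps_const 4 - fps_const (4 * (3 + - sqrt 5)) * fps_X
                     - fps_const (2 * (- sqrt 5 - 3)) * fps_X ^ 2)) / fps_const 4"
    by (simp only: X3_def)
  then have "2 * (1 - X3) * (1 - fps_X * X3) = fps_const (- 1 - - sqrt 5) * fps_X * X3"
    by (intro radical_formula_kernel_root) simp_all
  then show ?thesis
    by (simp only: minus_minus fps_const_add[symmetric] fps_const_neg[symmetric] fps_const_1_eq_1
        diff_minus_eq_add)
qed

text \<open>A certificate that the target relation lies in the ideal generated by the two kernel
  equations and s * s - 5.\<close>

lemma two_kernel_roots_identity:
  fixes z a b s :: "'a::comm_ring_1"
  shows "2 * z^2 * (((3 + s) * (1 - b) - (3 - s) * (1 - a)) * (a * b * z^2 - a * z - b * z - z + 1)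
           - 2 * s * (1 - a) * (1 - b) * (a * b * z^2 - a * z - b * z - z + 1)
           - ((3 + s) * (1 - b) - (3 - s) * (1 - a)) * (1 - a * z - b * z)) =
         (- 2 * z^2 * s + 2 * z^2 * b * s + 3 * z^3 * b + z^3 * b * s - 2 * z^3 * b^2 * s)
           * (2 * (1 - a) * (1 - z * a) - (- 1 - s) * z * a)
         + (- 3 * z^3 * a + z^3 * a * s^2) * (2 * (1 - b) * (1 - z * b) - (- 1 + s) * z * b)
         + z^4 * a * b * s * (s * s - 5)"
  by (simp add: algebra_simps power2_eq_square power3_eq_cube power4_eq_xxxx)

lemma series_from_two_kernel_roots:
  fixes z a b s G D :: "'a::idom"
  assumes two: "(2::'a) \<noteq> 0" and z: "z \<noteq> 0" and s: "s * s = 5"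
    and ka: "2 * (1 - a) * (1 - z * a) = (- 1 - s) * z * a"
    and kb: "2 * (1 - b) * (1 - z * b) = (- 1 + s) * z * b"
    and Ga: "(1 - a) * (- 1 - s + 2 * z * D) = (3 + s) * G"
    and Gb: "(1 - b) * (- 1 + s + 2 * z * D) = (3 - s) * G"
    and nondeg: "(3 + s) * (1 - b) - (3 - s) * (1 - a) \<noteq> 0"
  shows "(1 + G) * (a * b * z^2 - a * z - b * z - z + 1) = 1 - a * z - b * z"
proof -
  define B where "B = (3 + s) * (1 - b) - (3 - s) * (1 - a)"
  define E where "E = a * b * z^2 - a * z - b * z - z + 1"
  have "G * B = (1 - b) * ((3 + s) * G) - (1 - a) * ((3 - s) * G)"
    by (simp add: B_def algebra_simps)
  also have "\<dots> = (1 - b) * ((1 - a) * (- 1 - s + 2 * z * D)) - (1 - a) * ((1 - b) * (- 1 + s + 2 * z * D))"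
    by (simp only: Ga Gb)
  also have "\<dots> = - 2 * s * (1 - a) * (1 - b)"
    by (simp add: algebra_simps)
  finally have GB: "G * B = - 2 * s * (1 - a) * (1 - b)" .
  have "2 * z^2 * (B * E - 2 * s * (1 - a) * (1 - b) * E - B * (1 - a * z - b * z)) = 0"
    unfolding B_def E_def two_kernel_roots_identity ka kb s by simp
  then have Q: "B * E - 2 * s * (1 - a) * (1 - b) * E - B * (1 - a * z - b * z) = 0"
    using two z by simp
  have "B * ((1 + G) * E - (1 - a * z - b * z)) =
      (B * E - 2 * s * (1 - a) * (1 - b) * E - B * (1 - a * z - b * z))
      + (G * B - - 2 * s * (1 - a) * (1 - b)) * E"
    by (simp add: algebra_simps)
  also have "\<dots> = 0"
    by (simp only: Q GB diff_self mult_zero_left add_0)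
  finally show ?thesis
    using nondeg by (simp add: B_def E_def)
qed

lemma X1_X3_nondegenerate:
  "(3 + fps_const (sqrt 5)) * (1 - X3) - (3 - fps_const (sqrt 5)) * (1 - X1) \<noteq> 0"
proof -
  have X1_1: "X1 $ 1 = (1 + sqrt 5) / 2" and X3_1: "X3 $ 1 = (1 - sqrt 5) / 2"
    using kernel_root_coeffs(2)[OF X1_kernel_root] kernel_root_coeffs(2)[OF X3_kernel_root]
    by simp_all
  have "((3 + fps_const (sqrt 5)) * (1 - X3) - (3 - fps_const (sqrt 5)) * (1 - X1)) $ 1
      = (3 - sqrt 5) * X1 $ 1 - (3 + sqrt 5) * X3 $ 1"
    by (simp add: fps_numeral_fps_const del: One_nat_def)
  also have "\<dots> = 2 * sqrt 5"
    unfolding X1_1 X3_1 by (simp add: field_simps algebra_simps)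
  finally show ?thesis
    by (metis fps_zero_nth mult_eq_0_iff real_sqrt_eq_zero_cancel_iff zero_neq_numeral)
qed

lemma count_series_kernel_solution:
  "(1 + fps_X * count_series) * (X1 * X3 * fps_X ^ 2 - X1 * fps_X - X3 * fps_X - fps_X + 1) =
     1 - X1 * fps_X - X3 * fps_X"
proof -
  define s :: "real fps" where "s = fps_const (sqrt 5)"
  have s5: "s * s = 5"
    by (simp add: s_def fps_numeral_fps_const)
  have "X1 \<noteq> 0" "X3 \<noteq> 0"
    using kernel_root_coeffs(1)[OF X1_kernel_root] kernel_root_coeffs(1)[OF X3_kernel_root] by auto
  with s5 have
    G1: "(1 - X1) * (- 1 - s + 2 * fps_X * total_room_series) = (3 + s) * (fps_X * count_series)"
    and G3: "(1 - X3) * (- 1 + s + 2 * fps_X * total_room_series) = (3 - s) * (fps_X * count_series)"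
    using kernel_root_relation[OF _ X1_kernel_root[folded s_def]]
      kernel_root_relation[OF _ X3_kernel_root[folded s_def]]
    by (simp_all add: algebra_simps)
  show ?thesis
    by (rule series_from_two_kernel_roots[OF _ _ s5 X1_kernel_root[folded s_def]
          X3_kernel_root[folded s_def] G1 G3 X1_X3_nondegenerate[folded s_def]]) simp_all
qed

theorem mainTheorem9:
  shows "Abs_fps (\<lambda>n. real (I_count n)) =
     - (X1 * fps_X + X3 * fps_X - 1) /
       (X1 * X3 * fps_X ^ 2 - X1 * fps_X - X3 * fps_X - fps_X + 1)"
proof -
  define E where "E = X1 * X3 * fps_X ^ 2 - X1 * fps_X - X3 * fps_X - fps_X + 1"
  have "E $ 0 = 1"
    by (simp add: E_def)
  then have "E \<noteq> 0"
    by (metis fps_zero_nth zero_neq_one)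
  then have "Abs_fps (\<lambda>n. real (I_count n)) = (1 + fps_X * count_series) * E / E"
    by (simp add: count_series_I_count)
  also have "\<dots> = - (X1 * fps_X + X3 * fps_X - 1) / E"
    unfolding E_def count_series_kernel_solution by (simp add: algebra_simps)
  finally show ?thesis
    unfolding E_def .
qed

end
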